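(* Let $H=(V,E)$ be an $n$-vertex undirected multigraph without self-loops and with minimum degree at least $3$. Let $\gamma\ge 1$, let $\Sigma$ be a set, and suppose each edge $e\in E$ is assigned a set $w_e\subseteq\Sigma$ with $|w_e|\le\gamma$, such that every $c\in\Sigma$ satisfies $|\{e\in E: c\in w_e\}|\le\gamma$. Let $\beta=\lceil\log_{3/2}(12\gamma^2)\rceil$. Then there exist a tree $T_0=(V_0,E_0)$ that is a subgraph of $H$ and a vertex $r_0\in V_0$ such that: (1) $|V_0|\le 4(\log_{3/2}n+2)$; (2) there exist two distinct edges $e_1,e_2\in E\setminus E_0$ each having both endpoints in $V_0$; (3) $T_0$ has at most $4$ leaves; (4) for every pair of edges $e_1,e_2\in E_0$ with $w_{e_1}\cap w_{e_2}\neq\emptyset$ we have $|\mathrm{dist}_{T_0}(r_0,e_1)-\mathrm{dist}_{T_0}(r_0,e_2)|\le\beta$, where for an edge $uv$, $\mathrm{dist}_{T_0}(r_0,uv)=\min(\mathrm{dist}_{T_0}(r_0,u),\mathrm{dist}_{T_0}(r_0,v))$.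
   Context: Parallel edges are allowed in $H$; distinct parallel edges are distinct elements of $E$. $\mathrm{dist}_{T_0}$ denotes the distance in the tree $T_0$. *)

theory Defs
  imports Complex_Main
begin

text \<open>Undirected multigraphs: vertices V, edge set E (edges are abstract elements, so
parallel edges are distinct elements), and an endpoint map ends :: edge => vertex set.
An edge without self-loop has exactly two endpoints.\<close>

definition loopless_multigraph :: "'v set \<Rightarrow> 'e set \<Rightarrow> ('e \<Rightarrow> 'v set) \<Rightarrow> bool" where
  "loopless_multigraph V E ends \<longleftrightarrow> finite V \<and> finite E \<and>
     (\<forall>e\<in>E. ends e \<subseteq> V \<and> card (ends e) = 2)"

definition mdegree :: "'e set \<Rightarrow> ('e \<Rightarrow> 'v set) \<Rightarrow> 'v \<Rightarrow> nat" where
  "mdegree E ends v = card {e\<in>E. v \<in> ends e}"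

definition mwalk :: "'e set \<Rightarrow> ('e \<Rightarrow> 'v set) \<Rightarrow> 'v list \<Rightarrow> 'e list \<Rightarrow> bool" where
  "mwalk E ends vs es \<longleftrightarrow> length vs = Suc (length es) \<and> set es \<subseteq> E \<and>
     (\<forall>i<length es. ends (es ! i) = {vs ! i, vs ! Suc i})"

definition mconnected :: "'v set \<Rightarrow> 'e set \<Rightarrow> ('e \<Rightarrow> 'v set) \<Rightarrow> bool" where
  "mconnected V E ends \<longleftrightarrow> (\<forall>u\<in>V. \<forall>v\<in>V. \<exists>vs es. mwalk E ends vs es \<and> hd vs = u \<and> last vs = v)"

text \<open>A cycle: distinct vertices v_0..v_(k-1), distinct edges e_0..e_(k-1), k >= 1,
e_i joining v_i and v_(i+1 mod k).  Two parallel edges form a cycle of length 2.\<close>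
definition has_mcycle :: "'e set \<Rightarrow> ('e \<Rightarrow> 'v set) \<Rightarrow> bool" where
  "has_mcycle E ends \<longleftrightarrow> (\<exists>vs es. length es \<ge> 1 \<and> length vs = length es \<and>
      distinct vs \<and> distinct es \<and> set es \<subseteq> E \<and>
      (\<forall>i<length es. ends (es ! i) = {vs ! i, vs ! (Suc i mod length es)}))"

definition is_mtree :: "'v set \<Rightarrow> 'e set \<Rightarrow> ('e \<Rightarrow> 'v set) \<Rightarrow> bool" where
  "is_mtree V0 E0 ends \<longleftrightarrow> finite V0 \<and> V0 \<noteq> {} \<and> finite E0 \<and>
     (\<forall>e\<in>E0. ends e \<subseteq> V0) \<and> mconnected V0 E0 ends \<and> \<not> has_mcycle E0 ends"

definition mdist :: "'e set \<Rightarrow> ('e \<Rightarrow> 'v set) \<Rightarrow> 'v \<Rightarrow> 'v \<Rightarrow> nat" where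
  "mdist E ends u v = (LEAST k. \<exists>vs es. mwalk E ends vs es \<and> hd vs = u \<and> last vs = v \<and> length es = k)"

definition mdist_edge :: "'e set \<Rightarrow> ('e \<Rightarrow> 'v set) \<Rightarrow> 'v \<Rightarrow> 'e \<Rightarrow> nat" where
  "mdist_edge E ends r e = Min ((\<lambda>x. mdist E ends r x) ` ends e)"

definition mleaves :: "'v set \<Rightarrow> 'e set \<Rightarrow> ('e \<Rightarrow> 'v set) \<Rightarrow> 'v set" where
  "mleaves V E ends = {v\<in>V. mdegree E ends v = 1}"

end

theory Submission
  imports Defs
begin

text \<open>Grow a breadth-first tree from a vertex \<open>r\<close>, adding a vertex only through an edge
  whose \<open>w\<close>-set misses those of all tree edges lying \<open>\<beta>\<close> or more levels higher; then tree
  edges with intersecting \<open>w\<close>-sets have depths differing by at most \<open>\<beta>\<close>.  Run this for the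
  least number \<open>R\<close> of levels with \<open>(3/2)\<^sup>R > n\<close>.  If two non-tree edges have both endpoints
  in the tree, the tree paths from their at most four endpoints to their deepest common ancestor
  form \<open>T\<^sub>0\<close>.  Otherwise, as all degrees are at least 3, each level is at least twice as large
  as the previous one, up to at most two chord endpoints and the edges blocked by tree edges
  \<open>\<beta>\<close> levels higher, each of which blocks at most \<open>\<gamma>\<^sup>2\<close> edges.  As \<open>(3/2)\<^sup>\<beta> \<ge> 12\<gamma>\<^sup>2\<close>,
  the levels then grow by a factor \<open>3/2\<close>, and level \<open>R\<close> would contain more than \<open>n\<close>
  vertices.\<close>

section \<open>Growth of the level sizes\<close>

lemma nat_ceiling_log:
  fixes b x :: real
  assumes "1 < b" "1 \<le> x"
  shows "x \<le> b ^ nat \<lceil>log b x\<rceil>" and "int (nat \<lceil>log b x\<rceil>) = \<lceil>log b x\<rceil>"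
proof -
  have "x = b powr log b x" using assms by simp
  also have "\<dots> \<le> b powr real (nat \<lceil>log b x\<rceil>)"
    using assms(1) by (intro powr_mono) linarith+
  also have "\<dots> = b ^ nat \<lceil>log b x\<rceil>" using assms(1) by (simp add: powr_realpow)
  finally show "x \<le> b ^ nat \<lceil>log b x\<rceil>" .
  have "0 \<le> log b x" using assms by simp
  then show "int (nat \<lceil>log b x\<rceil>) = \<lceil>log b x\<rceil>" by simp
qed

lemma nat_floor_log:
  fixes b x :: real
  assumes "1 < b" "1 \<le> x"
  shows "x < b ^ Suc (nat \<lfloor>log b x\<rfloor>)" and "real (Suc (nat \<lfloor>log b x\<rfloor>)) \<le> log b x + 1"
proof -
  have "0 \<le> log b x" using assms by simp
  hence "log b x < real (Suc (nat \<lfloor>log b x\<rfloor>))" by linarith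
  hence "b powr log b x < b powr real (Suc (nat \<lfloor>log b x\<rfloor>))"
    using assms(1) by (intro powr_less_mono) auto
  thus "x < b ^ Suc (nat \<lfloor>log b x\<rfloor>)" using assms by (simp add: powr_realpow del: of_nat_Suc)
  show "real (Suc (nat \<lfloor>log b x\<rfloor>)) \<le> log b x + 1" using \<open>0 \<le> log b x\<close> by linarith
qed

text \<open>\<open>a k\<close> is the size of level \<open>k\<close> of the tree and \<open>d k\<close> the number of chord endpoints on it.\<close>
locale level_recurrence =
  fixes a d :: "nat \<Rightarrow> nat" and \<gamma> :: real and \<beta> R :: nat
  assumes a_0: "a 0 = 1"
    and recurrence: "\<And>k. k < R \<Longrightarrow> 2 * real (a k) + (if k = 0 then 1 else 0)
               \<le> real (a (Suc k)) + real (d k) + \<gamma>^2 * real (\<Sum>j<k-\<beta>. a (Suc j))"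
    and d_sum: "(\<Sum>k<R. d k) \<le> 2" and d_0: "d 0 \<le> 1"
    and beta: "12 * \<gamma>^2 \<le> (3/2)^\<beta>" and gamma: "1 \<le> \<gamma>"
begin

definition partial_sum :: "nat \<Rightarrow> nat" where
  "partial_sum m = (\<Sum>j<m. a (Suc j))"

lemma recurrence_partial_sum:
  "k < R \<Longrightarrow> 2 * real (a k) + (if k = 0 then 1 else 0)
     \<le> real (a (Suc k)) + real (d k) + \<gamma>^2 * real (partial_sum (k-\<beta>))"
  unfolding partial_sum_def by (rule recurrence)

lemma seven_le_beta: "7 \<le> \<beta>"
proof (rule ccontr)
  assume "\<not> 7 \<le> \<beta>"
  hence "(3/2::real)^\<beta> \<le> (3/2)^6" by (intro power_increasing) auto
  moreover have "12 \<le> 12 * \<gamma>^2" using gamma by (simp add: one_le_power)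
  moreover have "(3/2::real)^6 < 12" by (simp add: power_divide)
  ultimately show False using beta by linarith
qed

lemma d_le_2: "k < R \<Longrightarrow> d k \<le> 2"
  and d_0_plus: "0 < k \<Longrightarrow> k < R \<Longrightarrow> d 0 + d k \<le> 2"
  and d_0_1_plus: "1 < k \<Longrightarrow> k < R \<Longrightarrow> d 0 + d 1 + d k \<le> 2"
proof -
  have "\<And>K. K \<subseteq> {..<R} \<Longrightarrow> sum d K \<le> 2"
    using d_sum by (meson finite_lessThan order_trans sum_mono2 zero_le)
  from this[of "{k}"] this[of "{0,k}"] this[of "{0,1,k}"]
  show "k < R \<Longrightarrow> d k \<le> 2" "0 < k \<Longrightarrow> k < R \<Longrightarrow> d 0 + d k \<le> 2"
    "1 < k \<Longrightarrow> k < R \<Longrightarrow> d 0 + d 1 + d k \<le> 2" by auto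
qed

text \<open>The invariant behind the growth: the factor 8/9 absorbs the single exceptional
  step from level 1 to level 2, where two chord endpoints may slow growth to a ratio of 4/3.\<close>
definition growing :: "nat \<Rightarrow> bool" where
  "growing m \<longleftrightarrow> (3/2)^m \<le> real (a m) \<and> real (partial_sum m) \<le> 3 * real (a m) \<and>
     (\<forall>j. 1 \<le> j \<and> j \<le> m \<longrightarrow> 8/9 * (3/2)^(m-j) * real (a j) \<le> real (a m))"

lemma growing_1: "0 < R \<Longrightarrow> growing 1"
  using recurrence_partial_sum[of 0] a_0 d_0 unfolding growing_def partial_sum_def by auto

lemma step_before_beta:
  assumes k: "1 \<le> k" "k < R" "k \<le> \<beta>" and grow: "\<And>m. 1 \<le> m \<Longrightarrow> m \<le> k \<Longrightarrow> growing m"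
  shows "3/2 * real (a k) \<le> real (a (Suc k)) \<or> (k = 1 \<and> a 1 = 3 \<and> 4 \<le> a 2)"
proof -
  have step: "2 * real (a k) \<le> real (a (Suc k)) + real (d k)"
    using recurrence_partial_sum[OF k(2)] k by (simp add: partial_sum_def)
  show ?thesis
  proof (cases "2 * d k \<le> a k")
    case True then show ?thesis using step by linarith
  next
    case False
    have "(3/2::real)^1 \<le> (3/2)^k" using k by (intro power_increasing) auto
    hence "1 < a k" using grow[of k] k by (simp add: growing_def)
    hence d_k: "d k = 2" using False d_le_2[OF k(2)] by linarith
    hence "d 0 = 0" using d_0_plus[of k] k by simp
    hence a_1: "3 \<le> a 1" using recurrence_partial_sum[of 0] k a_0 by (simp add: partial_sum_def)
    show ?thesis
    proof (cases "k = 1")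
      case True
      have "a 1 = 3" using \<open>\<not> 2 * d k \<le> a k\<close> d_k a_1 unfolding True by linarith
      moreover have "4 \<le> a 2" using step d_k calculation unfolding True Suc_1 by linarith
      ultimately show ?thesis using True by simp
    next
      case False
      hence "d 1 = 0" using d_0_1_plus[of k] k d_k by simp
      moreover have "1 - \<beta> = 0" using seven_le_beta by simp
      ultimately have "2 * real (a 1) \<le> real (a 2)"
        using recurrence_partial_sum[of 1] k False by (simp add: partial_sum_def numeral_2_eq_2)
      hence "1 * 6 \<le> (3/2)^(k-2) * real (a 2)"
        using a_1 by (intro mult_mono) (auto simp: one_le_power)
      moreover have "8/9 * ((3/2)^(k-2) * real (a 2)) \<le> real (a k)"
        using grow[of k] k False by (simp add: growing_def mult.assoc)
      ultimately have "16/3 \<le> real (a k)" by linarith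
      then show ?thesis using \<open>\<not> 2 * d k \<le> a k\<close> d_k by linarith
    qed
  qed
qed

lemma step_after_beta:
  assumes k: "k < R" "\<beta> < k" and grow: "\<And>m. 1 \<le> m \<Longrightarrow> m \<le> k \<Longrightarrow> growing m"
  shows "3/2 * real (a k) \<le> real (a (Suc k))"
proof -
  define m where "m = k - \<beta>"
  have m: "1 \<le> m" "m \<le> k" "k - m = \<beta>" using k unfolding m_def by auto
  have sum_m: "real (partial_sum m) \<le> 3 * real (a m)"
    and a_m: "8/9 * (3/2)^\<beta> * real (a m) \<le> real (a k)"
    using grow[OF m(1,2)] grow[of k] m by (auto simp: growing_def)
  have "\<gamma>^2 * real (partial_sum m) \<le> \<gamma>^2 * (3 * real (a m))"
    using sum_m by (intro mult_left_mono) auto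
  moreover have "8/9 * (12 * \<gamma>^2) * real (a m) \<le> 8/9 * (3/2)^\<beta> * real (a m)"
    using beta by (intro mult_right_mono) auto
  ultimately have blocked: "\<gamma>^2 * real (partial_sum m) \<le> 9/32 * real (a k)"
    using a_m by (simp add: algebra_simps)
  have "(3/2::real)^8 \<le> (3/2)^k" using k seven_le_beta by (intro power_increasing) auto
  moreover have "(25::real) \<le> (3/2)^8" by (simp add: power_divide)
  moreover have "(3/2)^k \<le> real (a k)" using grow[of k] k by (simp add: growing_def)
  ultimately have "25 \<le> real (a k)" by linarith
  moreover have "2 * real (a k) \<le> real (a (Suc k)) + real (d k) + \<gamma>^2 * real (partial_sum m)"
    using recurrence_partial_sum[OF k(1)] k unfolding m_def by simp
  ultimately show ?thesis using blocked d_le_2[OF k(1)] by linarith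
qed

lemma growing_Suc:
  assumes k: "1 \<le> k" "k < R" and grow: "\<And>m. 1 \<le> m \<Longrightarrow> m \<le> k \<Longrightarrow> growing m"
  shows "growing (Suc k)"
proof -
  have "3/2 * real (a k) \<le> real (a (Suc k)) \<or> (k = 1 \<and> a 1 = 3 \<and> 4 \<le> a 2)"
    using step_before_beta[OF k _ grow] step_after_beta[OF k(2) _ grow] by linarith
  then show ?thesis
  proof
    assume ratio: "3/2 * real (a k) \<le> real (a (Suc k))"
    have a_k: "(3/2)^k \<le> real (a k)" "real (partial_sum k) \<le> 3 * real (a k)"
      "\<And>j. 1 \<le> j \<Longrightarrow> j \<le> k \<Longrightarrow> 8/9 * (3/2)^(k-j) * real (a j) \<le> real (a k)"
      using grow[of k] k by (auto simp: growing_def)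
    have "8/9 * (3/2)^(Suc k - j) * real (a j) \<le> real (a (Suc k))"
      if "1 \<le> j" "j \<le> k" for j
    proof -
      have "8/9 * (3/2)^(Suc k - j) * real (a j) = 3/2 * (8/9 * (3/2)^(k-j) * real (a j))"
        using that by (simp add: Suc_diff_le)
      also have "\<dots> \<le> 3/2 * real (a k)" using a_k(3)[OF that] by (intro mult_left_mono) auto
      finally show ?thesis using ratio by simp
    qed
    then show ?thesis using ratio a_k(1,2)
      by (auto simp: growing_def partial_sum_def le_Suc_eq)
  next
    assume "k = 1 \<and> a 1 = 3 \<and> 4 \<le> a 2"
    then show ?thesis by (auto simp: growing_def partial_sum_def le_Suc_eq numeral_2_eq_2)
  qed
qed

theorem power_le_last_level: "(3/2)^R \<le> real (a R)"
proof (cases "R = 0")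
  case True then show ?thesis using a_0 by simp
next
  case False
  have "1 \<le> k \<Longrightarrow> k \<le> R \<Longrightarrow> growing k" for k
  proof (induction k rule: less_induct)
    case (less k)
    show ?case
    proof (cases "k = 1")
      case True then show ?thesis using growing_1 False by simp
    next
      case False
      then obtain k' where "k = Suc k'" "1 \<le> k'" using less.prems by (cases k) auto
      then show ?thesis using growing_Suc[of k'] less by simp
    qed
  qed
  then show ?thesis using False by (simp add: growing_def)
qed

end

section \<open>Layered trees\<close>

definition layered_tree :: "'v set \<Rightarrow> 'e set \<Rightarrow> ('e \<Rightarrow> 'v set) \<Rightarrow> ('e \<Rightarrow> 'c set) \<Rightarrow> nat \<Rightarrow> nat
    \<Rightarrow> 'v \<Rightarrow> 'v set \<Rightarrow> ('v \<Rightarrow> 'e) \<Rightarrow> ('v \<Rightarrow> 'v) \<Rightarrow> ('v \<Rightarrow> nat) \<Rightarrow> bool" where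
  "layered_tree V E ends w \<beta> R r U par pv \<delta> \<longleftrightarrow> U \<subseteq> V \<and> r \<in> U \<and> \<delta> r = 0 \<and> (\<forall>x\<in>U. \<delta> x \<le> R) \<and>
     (\<forall>x\<in>U-{r}. par x \<in> E \<and> pv x \<in> U \<and> ends (par x) = {x, pv x} \<and> \<delta> x = Suc (\<delta> (pv x))) \<and>
     (\<forall>x\<in>U-{r}. \<forall>y\<in>U-{r}. w (par x) \<inter> w (par y) \<noteq> {} \<longrightarrow> \<delta> x \<le> \<delta> y + \<beta>)"

text \<open>Maximality up to depth \<open>i\<close>: an edge leaving \<open>U\<close> from depth below \<open>i\<close> cannot
  become a parent edge, since its \<open>w\<close>-set meets that of a tree edge at least \<open>\<beta>\<close>
  levels closer to the root.\<close>
definition blocked_below :: "'e set \<Rightarrow> ('e \<Rightarrow> 'v set) \<Rightarrow> ('e \<Rightarrow> 'c set) \<Rightarrow> nat \<Rightarrow> 'v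
    \<Rightarrow> 'v set \<Rightarrow> ('v \<Rightarrow> 'e) \<Rightarrow> ('v \<Rightarrow> nat) \<Rightarrow> nat \<Rightarrow> bool" where
  "blocked_below E ends w \<beta> r U par \<delta> i \<longleftrightarrow>
     (\<forall>x\<in>U. \<delta> x < i \<longrightarrow> (\<forall>e\<in>E. x \<in> ends e \<longrightarrow> e \<notin> par ` (U - {r}) \<longrightarrow> \<not> ends e \<subseteq> U \<longrightarrow>
        (\<exists>y\<in>U-{r}. \<delta> y + \<beta> \<le> \<delta> x \<and> w e \<inter> w (par y) \<noteq> {})))"

lemma card_2_eq_doubleton: "card A = 2 \<Longrightarrow> x \<in> A \<Longrightarrow> u \<in> A \<Longrightarrow> x \<noteq> u \<Longrightarrow> A = {x, u}"
  by (metis card_2_iff doubleton_eq_iff insertE singletonD)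

lemma layered_tree_insert:
  assumes T: "layered_tree V E ends w \<beta> R r U par pv \<delta>"
    and x: "x \<in> U" "Suc (\<delta> x) \<le> R" and depth: "\<forall>z\<in>U. \<delta> z \<le> Suc (\<delta> x)"
    and e: "e \<in> E" "ends e = {u, x}" "u \<in> V" "u \<notin> U"
    and unblocked: "\<forall>y\<in>U-{r}. w e \<inter> w (par y) \<noteq> {} \<longrightarrow> \<delta> x < \<delta> y + \<beta>"
  shows "layered_tree V E ends w \<beta> R r (insert u U) (par(u := e)) (pv(u := x)) (\<delta>(u := Suc (\<delta> x)))"
    (is "layered_tree V E ends w \<beta> R r ?U ?par ?pv ?\<delta>")
proof -
  have U: "U \<subseteq> V" "r \<in> U" "\<delta> r = 0" "\<forall>z\<in>U. \<delta> z \<le> R"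
    and parent: "\<And>z. z \<in> U - {r} \<Longrightarrow> par z \<in> E \<and> pv z \<in> U \<and> ends (par z) = {z, pv z} \<and> \<delta> z = Suc (\<delta> (pv z))"
    and conflict: "\<And>y z. y \<in> U - {r} \<Longrightarrow> z \<in> U - {r} \<Longrightarrow> w (par y) \<inter> w (par z) \<noteq> {} \<Longrightarrow> \<delta> y \<le> \<delta> z + \<beta>"
    using T unfolding layered_tree_def by blast+
  have "r \<noteq> u" "x \<noteq> u" using U x e by auto
  have parent': "?par z \<in> E \<and> ?pv z \<in> ?U \<and> ends (?par z) = {z, ?pv z} \<and> ?\<delta> z = Suc (?\<delta> (?pv z))"
    if "z \<in> ?U - {r}" for z
  proof (cases "z = u")
    case True then show ?thesis using e x \<open>x \<noteq> u\<close> by auto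
  next
    case False
    hence "z \<in> U - {r}" using that by simp
    moreover have "pv z \<noteq> u" using parent[OF calculation] e by auto
    ultimately show ?thesis using parent False by simp
  qed
  have conflict': "?\<delta> y \<le> ?\<delta> z + \<beta>"
    if "y \<in> ?U - {r}" "z \<in> ?U - {r}" "w (?par y) \<inter> w (?par z) \<noteq> {}" for y z
  proof (cases "y = u"; cases "z = u")
    assume "y = u" "z \<noteq> u"
    then show ?thesis using that unblocked by (auto simp: Suc_le_eq)
  next
    assume "y \<noteq> u" "z = u"
    then have "\<delta> y \<le> Suc (\<delta> x)" using that depth by simp
    then show ?thesis using \<open>z = u\<close> \<open>y \<noteq> u\<close> by simp
  next
    assume "y \<noteq> u" "z \<noteq> u"
    then show ?thesis using that conflict by simp
  qed simp
  show ?thesis unfolding layered_tree_def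
    using U x e \<open>r \<noteq> u\<close> parent' conflict' by auto
qed

lemma blocked_below_extend:
  assumes blocked: "blocked_below E ends w \<beta> r U par \<delta> i" and "U \<subseteq> U'"
    and agree: "\<forall>x\<in>U. par' x = par x \<and> \<delta>' x = \<delta> x" and new: "\<forall>x\<in>U'-U. i \<le> \<delta>' x"
  shows "blocked_below E ends w \<beta> r U' par' \<delta>' i"
  unfolding blocked_below_def
proof (intro ballI impI)
  fix x e assume x: "x \<in> U'" "\<delta>' x < i" and e: "e \<in> E" "x \<in> ends e"
    and not_tree: "e \<notin> par' ` (U' - {r})" and leaves: "\<not> ends e \<subseteq> U'"
  have "x \<in> U" using x new by (meson Diff_iff not_le)
  hence "\<delta> x < i" using x agree by simp
  moreover have "e \<notin> par ` (U - {r})"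
  proof
    assume "e \<in> par ` (U - {r})"
    then obtain y where "y \<in> U - {r}" "e = par y" by blast
    hence "y \<in> U' - {r}" "e = par' y" using agree \<open>U \<subseteq> U'\<close> by auto
    then show False using not_tree by blast
  qed
  moreover have "\<not> ends e \<subseteq> U" using leaves \<open>U \<subseteq> U'\<close> by blast
  ultimately obtain y where "y \<in> U - {r}" "\<delta> y + \<beta> \<le> \<delta> x" "w e \<inter> w (par y) \<noteq> {}"
    using blocked[unfolded blocked_below_def, rule_format, OF \<open>x \<in> U\<close> _ e] by blast
  then show "\<exists>y\<in>U'-{r}. \<delta>' y + \<beta> \<le> \<delta>' x \<and> w e \<inter> w (par' y) \<noteq> {}"
    using agree \<open>U \<subseteq> U'\<close> \<open>x \<in> U\<close> by (intro bexI[of _ y]) auto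
qed

text \<open>Among all ways of attaching new vertices at depth \<open>Suc i\<close>, take one with the most
  vertices: no further vertex can then be attached at depth \<open>Suc i\<close>.\<close>
lemma layered_tree_saturate:
  assumes H: "loopless_multigraph V E ends"
    and T: "layered_tree V E ends w \<beta> R r U par pv \<delta>" and depth: "\<forall>x\<in>U. \<delta> x \<le> i"
    and i: "Suc i \<le> R"
  obtains U' par' pv' \<delta>' where "layered_tree V E ends w \<beta> R r U' par' pv' \<delta>'" "U \<subseteq> U'"
    "\<forall>x\<in>U'-U. \<delta>' x = Suc i" "\<forall>x\<in>U. par' x = par x \<and> \<delta>' x = \<delta> x" "\<forall>x\<in>U'. \<delta>' x \<le> Suc i"
    "\<And>x e u. x \<in> U' \<Longrightarrow> \<delta>' x = i \<Longrightarrow> e \<in> E \<Longrightarrow> ends e = {u, x} \<Longrightarrow> u \<in> V \<Longrightarrow> u \<notin> U' \<Longrightarrow>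
      \<exists>y\<in>U'-{r}. \<delta>' y + \<beta> \<le> \<delta>' x \<and> w e \<inter> w (par' y) \<noteq> {}"
proof -
  have finV: "finite V" using H unfolding loopless_multigraph_def by auto
  define extends where "extends t \<longleftrightarrow> (case t of (U', par', pv', \<delta>') \<Rightarrow>
      layered_tree V E ends w \<beta> R r U' par' pv' \<delta>' \<and> U \<subseteq> U' \<and> (\<forall>x\<in>U'-U. \<delta>' x = Suc i) \<and>
      (\<forall>x\<in>U. par' x = par x \<and> \<delta>' x = \<delta> x))" for t
  have "extends (U, par, pv, \<delta>)" unfolding extends_def using T by auto
  moreover have "\<forall>t. extends t \<longrightarrow> (card \<circ> fst) t < Suc (card V)"
  proof (intro allI impI)
    fix t assume "extends t"
    then have "fst t \<subseteq> V" unfolding extends_def layered_tree_def by (cases t) auto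
    then show "(card \<circ> fst) t < Suc (card V)" using card_mono[OF finV] by (simp add: le_imp_less_Suc)
  qed
  ultimately obtain t where "extends t"
    and t_max: "\<forall>t'. extends t' \<longrightarrow> (card \<circ> fst) t' \<le> (card \<circ> fst) t"
    using Lattices_Big.ex_has_greatest_nat by metis
  then obtain U' par' pv' \<delta>' where t: "t = (U', par', pv', \<delta>')"
    and T': "layered_tree V E ends w \<beta> R r U' par' pv' \<delta>'" and "U \<subseteq> U'"
    and new: "\<forall>x\<in>U'-U. \<delta>' x = Suc i" and agree: "\<forall>x\<in>U. par' x = par x \<and> \<delta>' x = \<delta> x"
    unfolding extends_def by (cases t) auto
  have depth': "\<forall>x\<in>U'. \<delta>' x \<le> Suc i" using depth new agree by (metis Diff_iff le_SucI order_refl)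
  show thesis
  proof (rule that[OF T' \<open>U \<subseteq> U'\<close> new agree depth'], rule ccontr)
    fix x e u assume x: "x \<in> U'" "\<delta>' x = i" and e: "e \<in> E" "ends e = {u, x}" "u \<in> V" "u \<notin> U'"
      and "\<not> (\<exists>y\<in>U'-{r}. \<delta>' y + \<beta> \<le> \<delta>' x \<and> w e \<inter> w (par' y) \<noteq> {})"
    hence "\<forall>y\<in>U'-{r}. w e \<inter> w (par' y) \<noteq> {} \<longrightarrow> \<delta>' x < \<delta>' y + \<beta>" by (auto simp: not_less)
    hence "layered_tree V E ends w \<beta> R r (insert u U') (par'(u := e)) (pv'(u := x)) (\<delta>'(u := Suc i))"
      using layered_tree_insert[OF T' x(1) _ _ e] depth' x i by simp
    hence "extends (insert u U', par'(u := e), pv'(u := x), \<delta>'(u := Suc i))"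
      using \<open>U \<subseteq> U'\<close> e(4) new agree unfolding extends_def by auto
    hence "card (insert u U') \<le> card U'" using t_max t by fastforce
    moreover have "finite U'" using T' finV unfolding layered_tree_def by (auto intro: finite_subset)
    ultimately show False using e(4) by simp
  qed
qed

lemma layered_tree_deepen:
  assumes H: "loopless_multigraph V E ends"
    and T: "layered_tree V E ends w \<beta> R r U par pv \<delta>" and depth: "\<forall>x\<in>U. \<delta> x \<le> i"
    and blocked: "blocked_below E ends w \<beta> r U par \<delta> i" and i: "Suc i \<le> R"
  shows "\<exists>U' par' pv' \<delta>'. layered_tree V E ends w \<beta> R r U' par' pv' \<delta>' \<and> (\<forall>x\<in>U'. \<delta>' x \<le> Suc i) \<and>
           blocked_below E ends w \<beta> r U' par' \<delta>' (Suc i)"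
proof -
  obtain U' par' pv' \<delta>' where T': "layered_tree V E ends w \<beta> R r U' par' pv' \<delta>'" and "U \<subseteq> U'"
    and new: "\<forall>x\<in>U'-U. \<delta>' x = Suc i" and agree: "\<forall>x\<in>U. par' x = par x \<and> \<delta>' x = \<delta> x"
    and depth': "\<forall>x\<in>U'. \<delta>' x \<le> Suc i"
    and saturated: "\<And>x e u. x \<in> U' \<Longrightarrow> \<delta>' x = i \<Longrightarrow> e \<in> E \<Longrightarrow> ends e = {u, x} \<Longrightarrow> u \<in> V \<Longrightarrow>
      u \<notin> U' \<Longrightarrow> \<exists>y\<in>U'-{r}. \<delta>' y + \<beta> \<le> \<delta>' x \<and> w e \<inter> w (par' y) \<noteq> {}"
    using layered_tree_saturate[OF H T depth i] by blast
  have blocked_i: "blocked_below E ends w \<beta> r U' par' \<delta>' i"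
    using blocked_below_extend[OF blocked \<open>U \<subseteq> U'\<close>] agree new by auto
  have "blocked_below E ends w \<beta> r U' par' \<delta>' (Suc i)"
    unfolding blocked_below_def
  proof (intro ballI impI)
    fix x e assume x: "x \<in> U'" "\<delta>' x < Suc i" and e: "e \<in> E" "x \<in> ends e"
      and "e \<notin> par' ` (U' - {r})" and leaves: "\<not> ends e \<subseteq> U'"
    show "\<exists>y\<in>U'-{r}. \<delta>' y + \<beta> \<le> \<delta>' x \<and> w e \<inter> w (par' y) \<noteq> {}"
    proof (cases "\<delta>' x < i")
      case True
      then show ?thesis using blocked_i x(1) e \<open>e \<notin> _\<close> leaves unfolding blocked_below_def by blast
    next
      case False
      obtain u where u: "u \<in> ends e" "u \<notin> U'" using leaves by blast
      have "card (ends e) = 2" "ends e \<subseteq> V" using H e unfolding loopless_multigraph_def by auto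
      hence "ends e = {u, x}" "u \<in> V" using card_2_eq_doubleton u x(1) e(2) by (metis, auto)
      then show ?thesis using saturated[OF x(1) _ e(1) _ _ u(2)] x(2) False by simp
    qed
  qed
  then show ?thesis using T' depth' by blast
qed

lemma blocked_layered_tree_exists:
  assumes H: "loopless_multigraph V E ends" and r: "r \<in> V"
  shows "\<exists>U par pv \<delta>. layered_tree V E ends w \<beta> R r U par pv \<delta> \<and> blocked_below E ends w \<beta> r U par \<delta> R"
proof -
  have "i \<le> R \<Longrightarrow> \<exists>U par pv \<delta>. layered_tree V E ends w \<beta> R r U par pv \<delta> \<and> (\<forall>x\<in>U. \<delta> x \<le> i) \<and>
          blocked_below E ends w \<beta> r U par \<delta> i" for i
  proof (induction i)
    case 0
    have "layered_tree V E ends w \<beta> R r {r} par pv (\<lambda>_. 0)" for par pv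
      using r unfolding layered_tree_def by auto
    moreover have "blocked_below E ends w \<beta> r {r} par (\<lambda>_. 0) 0" for par
      unfolding blocked_below_def by auto
    ultimately show ?case by blast
  next
    case (Suc i)
    then obtain U par pv \<delta> where "layered_tree V E ends w \<beta> R r U par pv \<delta>" "\<forall>x\<in>U. \<delta> x \<le> i"
      "blocked_below E ends w \<beta> r U par \<delta> i" by (auto dest: Suc_leD)
    then show ?case using layered_tree_deepen[OF H] Suc.prems by blast
  qed
  then show ?thesis by blast
qed

section \<open>Counting the edges at a level\<close>

lemma card_conflicting_edges_le:
  fixes \<gamma> :: real and \<Sigma> :: "'c set" and w :: "'e \<Rightarrow> 'c set"
  assumes w_sub: "\<forall>e\<in>E. w e \<subseteq> \<Sigma>"
    and w_card: "\<forall>e\<in>E. finite (w e) \<and> real (card (w e)) \<le> \<gamma>"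
    and c_card: "\<forall>c\<in>\<Sigma>. finite {e\<in>E. c \<in> w e} \<and> real (card {e\<in>E. c \<in> w e}) \<le> \<gamma>"
    and f: "f \<in> E"
  shows "real (card {e\<in>E. w e \<inter> w f \<noteq> {}}) \<le> \<gamma>^2"
proof -
  have "{e\<in>E. w e \<inter> w f \<noteq> {}} = (\<Union>c\<in>w f. {e\<in>E. c \<in> w e})" by auto
  hence "card {e\<in>E. w e \<inter> w f \<noteq> {}} \<le> (\<Sum>c\<in>w f. card {e\<in>E. c \<in> w e})"
    using w_card f by (simp add: card_UN_le)
  hence "real (card {e\<in>E. w e \<inter> w f \<noteq> {}}) \<le> real (\<Sum>c\<in>w f. card {e\<in>E. c \<in> w e})"
    by (simp only: of_nat_le_iff)
  also have "\<dots> = (\<Sum>c\<in>w f. real (card {e\<in>E. c \<in> w e}))" by simp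
  also have "\<dots> \<le> (\<Sum>c\<in>w f. \<gamma>)" using c_card w_sub f by (intro sum_mono) auto
  also have "\<dots> = real (card (w f)) * \<gamma>" by simp
  also have "\<dots> \<le> \<gamma> * \<gamma>"
    using w_card f by (intro mult_right_mono) (auto intro: order_trans[OF of_nat_0_le_iff])
  finally show ?thesis by (simp add: power2_eq_square)
qed

lemma sum_card_incident_edges:
  assumes "finite A" "finite C" "\<forall>e\<in>C. ends e \<subseteq> A"
  shows "(\<Sum>v\<in>A. card {e\<in>C. v \<in> ends e}) = (\<Sum>e\<in>C. card (ends e))"
proof -
  have "(\<Sum>v\<in>A. card {e\<in>C. v \<in> ends e}) = (\<Sum>v\<in>A. \<Sum>e\<in>C. if v \<in> ends e then 1 else 0)"
    using assms(2) by (simp add: sum.If_cases Int_def)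
  also have "\<dots> = (\<Sum>e\<in>C. \<Sum>v\<in>A. if v \<in> ends e then 1 else 0)" by (rule sum.swap)
  also have "\<dots> = (\<Sum>e\<in>C. card (ends e))"
    using assms by (intro sum.cong) (auto simp: sum.If_cases Int_absorb1)
  finally show ?thesis .
qed

locale layered_tree_graph =
  fixes V :: "'v set" and E :: "'e set" and ends :: "'e \<Rightarrow> 'v set" and w :: "'e \<Rightarrow> 'c set"
    and \<beta> R :: nat and r :: 'v and U :: "'v set" and par :: "'v \<Rightarrow> 'e" and pv :: "'v \<Rightarrow> 'v"
    and \<delta> :: "'v \<Rightarrow> nat"
  assumes graph: "loopless_multigraph V E ends" and tree: "layered_tree V E ends w \<beta> R r U par pv \<delta>"
begin

lemma finite_V: "finite V" and finite_E: "finite E" and card_ends: "e \<in> E \<Longrightarrow> card (ends e) = 2"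
  using graph unfolding loopless_multigraph_def by auto

lemma finite_ends: "e \<in> E \<Longrightarrow> finite (ends e)"
  using card_ends by (metis card.infinite zero_neq_numeral)

lemma U_subset: "U \<subseteq> V" and root_in_U: "r \<in> U" and depth_root: "\<delta> r = 0"
  and depth_le: "x \<in> U \<Longrightarrow> \<delta> x \<le> R"
  using tree unfolding layered_tree_def by auto

lemma finite_U: "finite U"
  using U_subset finite_V finite_subset by blast

lemma par_in_E: "x \<in> U \<Longrightarrow> x \<noteq> r \<Longrightarrow> par x \<in> E"
  and pv_in_U: "x \<in> U \<Longrightarrow> x \<noteq> r \<Longrightarrow> pv x \<in> U"
  and ends_par: "x \<in> U \<Longrightarrow> x \<noteq> r \<Longrightarrow> ends (par x) = {x, pv x}"
  and depth_pv: "x \<in> U \<Longrightarrow> x \<noteq> r \<Longrightarrow> \<delta> x = Suc (\<delta> (pv x))"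
  using tree unfolding layered_tree_def by blast+

lemma depth_conflict:
  "x \<in> U \<Longrightarrow> x \<noteq> r \<Longrightarrow> y \<in> U \<Longrightarrow> y \<noteq> r \<Longrightarrow> w (par x) \<inter> w (par y) \<noteq> {} \<Longrightarrow> \<delta> x \<le> \<delta> y + \<beta>"
  using tree unfolding layered_tree_def by blast

lemma depth_eq_0_imp_root: "x \<in> U \<Longrightarrow> \<delta> x = 0 \<Longrightarrow> x = r"
  using depth_pv by fastforce

lemma par_inj_on: "inj_on par (U - {r})"
proof (rule inj_onI, rule ccontr)
  fix x y assume xy: "x \<in> U - {r}" "y \<in> U - {r}" "par x = par y" "x \<noteq> y"
  hence "{x, pv x} = {y, pv y}" using ends_par by (metis Diff_iff insertCI)
  hence "x = pv y" "y = pv x" using xy(4) by (auto simp: doubleton_eq_iff)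
  have "\<delta> x = Suc (\<delta> y)" using depth_pv[of x] xy \<open>y = pv x\<close> by simp
  moreover have "\<delta> y = Suc (\<delta> x)" using depth_pv[of y] xy \<open>x = pv y\<close> by simp
  ultimately show False by simp
qed

definition level :: "nat \<Rightarrow> 'v set" where
  "level k = {x\<in>U. \<delta> x = k}"

definition children :: "'v \<Rightarrow> 'v set" where
  "children v = {x\<in>U-{r}. pv x = v}"

definition chords :: "'e set" where
  "chords = {e\<in>E. e \<notin> par ` (U - {r}) \<and> ends e \<subseteq> U}"

definition exits :: "'v \<Rightarrow> 'e set" where
  "exits v = {e\<in>E. e \<notin> par ` (U - {r}) \<and> \<not> ends e \<subseteq> U \<and> v \<in> ends e}"

lemma finite_level: "finite (level k)"
  unfolding level_def using finite_U by simp

lemma finite_chords: "finite chords"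
  unfolding chords_def using finite_E by simp

lemma level_0: "level 0 = {r}"
  unfolding level_def using root_in_U depth_root depth_eq_0_imp_root by blast

lemma mdegree_le_split:
  assumes "v \<in> U"
  shows "mdegree E ends v
    \<le> (if v = r then 0 else 1) + card (children v) + card {e\<in>chords. v \<in> ends e} + card (exits v)"
proof -
  define A where "A = (if v = r then {} else {v}) \<union> children v"
  have "{e\<in>E. v \<in> ends e} \<subseteq> par ` A \<union> {e\<in>chords. v \<in> ends e} \<union> exits v"
  proof
    fix e assume e: "e \<in> {e\<in>E. v \<in> ends e}"
    show "e \<in> par ` A \<union> {e\<in>chords. v \<in> ends e} \<union> exits v"
    proof (cases "e \<in> par ` (U - {r})")
      case True
      then obtain x where x: "x \<in> U - {r}" "e = par x" by blast
      hence "v = x \<or> v = pv x" using ends_par e by auto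
      hence "x \<in> A" using x unfolding A_def children_def by auto
      thus ?thesis using x by blast
    next
      case False then show ?thesis using e unfolding chords_def exits_def by auto
    qed
  qed
  moreover have "finite A" unfolding A_def children_def using finite_U by simp
  ultimately have "mdegree E ends v \<le> card (par ` A \<union> {e\<in>chords. v \<in> ends e} \<union> exits v)"
    unfolding mdegree_def chords_def exits_def using finite_E by (intro card_mono) auto
  also have "\<dots> \<le> card (par ` A) + card {e\<in>chords. v \<in> ends e} + card (exits v)"
    by (meson card_Un_le add_le_mono1 le_trans)
  also have "card (par ` A) \<le> (if v = r then 0 else 1) + card (children v)"
    using card_image_le[OF \<open>finite A\<close>, of par] card_Un_le[of "if v = r then {} else {v}" "children v"]
    unfolding A_def by auto
  finally show ?thesis by linarith
qed

lemma sum_card_children_le: "(\<Sum>v\<in>level k. card (children v)) \<le> card (level (Suc k))"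
proof -
  have "(\<Sum>v\<in>level k. card (children v)) = card (\<Union>v\<in>level k. children v)"
    using finite_level finite_U by (intro card_UN_disjoint[symmetric]) (auto simp: children_def)
  also have "\<dots> \<le> card (level (Suc k))"
    using finite_level depth_pv by (intro card_mono) (auto simp: children_def level_def)
  finally show ?thesis .
qed

lemma card_deep_tree_vertices:
  "card {y\<in>U-{r}. \<delta> y + \<beta> \<le> k} = (\<Sum>j<k-\<beta>. card (level (Suc j)))"
proof -
  have "{y\<in>U-{r}. \<delta> y + \<beta> \<le> k} = (\<Union>j<k-\<beta>. level (Suc j))"
  proof (intro equalityI subsetI)
    fix y assume y: "y \<in> {y\<in>U-{r}. \<delta> y + \<beta> \<le> k}"
    hence "\<delta> y = Suc (\<delta> (pv y))" using depth_pv by blast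
    thus "y \<in> (\<Union>j<k-\<beta>. level (Suc j))" using y unfolding level_def
      by (intro UN_I[of "\<delta> (pv y)"]) auto
  next
    fix y assume "y \<in> (\<Union>j<k-\<beta>. level (Suc j))"
    then obtain j where "j < k - \<beta>" "y \<in> U" "\<delta> y = Suc j" unfolding level_def by blast
    thus "y \<in> {y\<in>U-{r}. \<delta> y + \<beta> \<le> k}" using depth_root by auto
  qed
  also have "card \<dots> = (\<Sum>j<k-\<beta>. card (level (Suc j)))"
  proof (rule card_UN_disjoint)
    show "\<forall>i\<in>{..<k-\<beta>}. \<forall>j\<in>{..<k-\<beta>}. i \<noteq> j \<longrightarrow> level (Suc i) \<inter> level (Suc j) = {}"
      unfolding level_def by auto
  qed (simp_all add: finite_level)
  finally show ?thesis .
qed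

lemma card_UN_exits_level: "card (\<Union>v\<in>level k. exits v) = (\<Sum>v\<in>level k. card (exits v))"
proof (intro card_UN_disjoint finite_level ballI impI)
  show "finite (exits v)" for v unfolding exits_def using finite_E by simp
  fix v v' assume vv: "v \<in> level k" "v' \<in> level k" "v \<noteq> v'"
  show "exits v \<inter> exits v' = {}"
  proof (rule ccontr)
    assume "exits v \<inter> exits v' \<noteq> {}"
    then obtain e where e: "e \<in> E" "v \<in> ends e" "v' \<in> ends e" "\<not> ends e \<subseteq> U"
      unfolding exits_def by blast
    hence "ends e = {v, v'}" using card_2_eq_doubleton[OF card_ends] vv(3) by blast
    thus False using e(4) vv unfolding level_def by auto
  qed
qed

lemma exits_level_subset_conflicting:
  assumes blocked: "blocked_below E ends w \<beta> r U par \<delta> R" and k: "k < R"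
  shows "(\<Union>v\<in>level k. exits v) \<subseteq> (\<Union>y\<in>{y\<in>U-{r}. \<delta> y + \<beta> \<le> k}. {e\<in>E. w e \<inter> w (par y) \<noteq> {}})"
proof
  fix e assume "e \<in> (\<Union>v\<in>level k. exits v)"
  then obtain v where v: "v \<in> U" "\<delta> v < R" "\<delta> v = k" "e \<in> exits v"
    unfolding level_def using k by blast
  hence e: "e \<in> E" "v \<in> ends e" "e \<notin> par ` (U - {r})" "\<not> ends e \<subseteq> U"
    unfolding exits_def by auto
  obtain y where "y \<in> U - {r}" "\<delta> y + \<beta> \<le> \<delta> v" "w e \<inter> w (par y) \<noteq> {}"
    using blocked[unfolded blocked_below_def, rule_format, OF v(1,2) e] by blast
  then show "e \<in> (\<Union>y\<in>{y\<in>U-{r}. \<delta> y + \<beta> \<le> k}. {e\<in>E. w e \<inter> w (par y) \<noteq> {}})"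
    using e(1) v(3) by blast
qed

lemma sum_card_exits_le:
  fixes \<gamma> :: real and \<Sigma> :: "'c set"
  assumes blocked: "blocked_below E ends w \<beta> r U par \<delta> R" and k: "k < R"
    and w_sub: "\<forall>e\<in>E. w e \<subseteq> \<Sigma>"
    and w_card: "\<forall>e\<in>E. finite (w e) \<and> real (card (w e)) \<le> \<gamma>"
    and c_card: "\<forall>c\<in>\<Sigma>. finite {e\<in>E. c \<in> w e} \<and> real (card {e\<in>E. c \<in> w e}) \<le> \<gamma>"
  shows "real (\<Sum>v\<in>level k. card (exits v)) \<le> \<gamma>^2 * real (\<Sum>j<k-\<beta>. card (level (Suc j)))"
proof -
  define Y where "Y = {y\<in>U-{r}. \<delta> y + \<beta> \<le> k}"
  have "finite Y" unfolding Y_def using finite_U by simp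
  have "(\<Sum>v\<in>level k. card (exits v)) \<le> card (\<Union>y\<in>Y. {e\<in>E. w e \<inter> w (par y) \<noteq> {}})"
    unfolding card_UN_exits_level[symmetric] Y_def using \<open>finite Y\<close> finite_E
    by (intro card_mono exits_level_subset_conflicting[OF blocked k]) (simp add: Y_def)
  also have "\<dots> \<le> (\<Sum>y\<in>Y. card {e\<in>E. w e \<inter> w (par y) \<noteq> {}})"
    using \<open>finite Y\<close> by (rule card_UN_le)
  finally have "real (\<Sum>v\<in>level k. card (exits v))
      \<le> real (\<Sum>y\<in>Y. card {e\<in>E. w e \<inter> w (par y) \<noteq> {}})"
    by (simp only: of_nat_le_iff)
  also have "\<dots> = (\<Sum>y\<in>Y. real (card {e\<in>E. w e \<inter> w (par y) \<noteq> {}}))" by simp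
  also have "\<dots> \<le> (\<Sum>y\<in>Y. \<gamma>^2)"
  proof (rule sum_mono)
    fix y assume "y \<in> Y"
    hence "par y \<in> E" using par_in_E unfolding Y_def by blast
    then show "real (card {e\<in>E. w e \<inter> w (par y) \<noteq> {}}) \<le> \<gamma>^2"
      by (rule card_conflicting_edges_le[OF w_sub w_card c_card])
  qed
  also have "\<dots> = \<gamma>^2 * real (\<Sum>j<k-\<beta>. card (level (Suc j)))"
    using card_deep_tree_vertices unfolding Y_def by simp
  finally show ?thesis .
qed

text \<open>Counting the at least three edges at each vertex of level \<open>k\<close>: the parent edge
  (absent only at the root), the child edges, chords, and edges leaving \<open>U\<close>.\<close>
lemma level_recurrence_step:
  fixes \<gamma> :: real and \<Sigma> :: "'c set"
  assumes mindeg: "\<forall>v\<in>V. 3 \<le> mdegree E ends v"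
    and blocked: "blocked_below E ends w \<beta> r U par \<delta> R" and k: "k < R"
    and w_sub: "\<forall>e\<in>E. w e \<subseteq> \<Sigma>"
    and w_card: "\<forall>e\<in>E. finite (w e) \<and> real (card (w e)) \<le> \<gamma>"
    and c_card: "\<forall>c\<in>\<Sigma>. finite {e\<in>E. c \<in> w e} \<and> real (card {e\<in>E. c \<in> w e}) \<le> \<gamma>"
  shows "2 * real (card (level k)) + (if k = 0 then 1 else 0)
     \<le> real (card (level (Suc k))) + real (\<Sum>v\<in>level k. card {e\<in>chords. v \<in> ends e})
       + \<gamma>^2 * real (\<Sum>j<k-\<beta>. card (level (Suc j)))"
proof -
  define up where "up v = (if v = r then 0 else 1::nat)" for v
  have "(\<Sum>v\<in>level k. 3) \<le> (\<Sum>v\<in>level k.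
      up v + card (children v) + card {e\<in>chords. v \<in> ends e} + card (exits v))"
  proof (rule sum_mono)
    fix v assume "v \<in> level k"
    hence "v \<in> U" unfolding level_def by blast
    hence "3 \<le> mdegree E ends v" using mindeg U_subset by blast
    then show "3 \<le> up v + card (children v) + card {e\<in>chords. v \<in> ends e} + card (exits v)"
      using mdegree_le_split[OF \<open>v \<in> U\<close>] unfolding up_def by linarith
  qed
  hence "3 * card (level k) \<le> sum up (level k) + (\<Sum>v\<in>level k. card (children v))
      + (\<Sum>v\<in>level k. card {e\<in>chords. v \<in> ends e}) + (\<Sum>v\<in>level k. card (exits v))"
    by (simp add: sum.distrib)
  moreover have "sum up (level k) + (if k = 0 then 1 else 0) = card (level k)"
  proof (cases "k = 0")
    case True then show ?thesis using level_0 by (simp add: up_def)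
  next
    case False
    hence "sum up (level k) = (\<Sum>v\<in>level k. 1)"
      using depth_root unfolding up_def level_def by (intro sum.cong) auto
    then show ?thesis using False by simp
  qed
  ultimately have "2 * card (level k) + (if k = 0 then 1 else 0) \<le> card (level (Suc k))
      + (\<Sum>v\<in>level k. card {e\<in>chords. v \<in> ends e}) + (\<Sum>v\<in>level k. card (exits v))"
    using sum_card_children_le[of k] by linarith
  hence "2 * real (card (level k)) + real (if k = 0 then 1 else 0::nat) \<le> real (card (level (Suc k)))
      + real (\<Sum>v\<in>level k. card {e\<in>chords. v \<in> ends e}) + real (\<Sum>v\<in>level k. card (exits v))"
    unfolding of_nat_add[symmetric] of_nat_numeral[symmetric, where 'a=real] of_nat_mult[symmetric]
    by (simp only: of_nat_le_iff)
  moreover have "real (if k = 0 then 1 else 0::nat) = (if k = 0 then 1 else 0)" by simp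
  ultimately show ?thesis using sum_card_exits_le[OF blocked k w_sub w_card c_card] by linarith
qed

lemma sum_levels_incident_chords_le:
  "(\<Sum>k<R. \<Sum>v\<in>level k. card {e\<in>chords. v \<in> ends e}) \<le> 2 * card chords"
proof -
  have "(\<Sum>k<R. \<Sum>v\<in>level k. card {e\<in>chords. v \<in> ends e})
      = (\<Sum>v\<in>(\<Union>k<R. level k). card {e\<in>chords. v \<in> ends e})"
    by (rule sum.UNION_disjoint[symmetric]) (auto simp: finite_U level_def)
  also have "\<dots> \<le> (\<Sum>v\<in>U. card {e\<in>chords. v \<in> ends e})"
    using finite_U by (intro sum_mono2) (auto simp: level_def)
  also have "\<dots> = (\<Sum>e\<in>chords. card (ends e))"
    using finite_U finite_E by (intro sum_card_incident_edges) (auto simp: chords_def)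
  also have "\<dots> = 2 * card chords"
    using card_ends by (simp add: chords_def)
  finally show ?thesis .
qed

end

section \<open>The subtree spanned by the chord endpoints\<close>

lemma mwalk_singleton: "mwalk E ends [v] []"
  unfolding mwalk_def by simp

lemma mwalk_nonempty: "mwalk E ends vs es \<Longrightarrow> vs \<noteq> []"
  unfolding mwalk_def by auto

lemma mwalk_Cons_iff:
  "mwalk E ends (v # vs) (e # es) \<longleftrightarrow> e \<in> E \<and> vs \<noteq> [] \<and> ends e = {v, hd vs} \<and> mwalk E ends vs es"
    (is "?walk \<longleftrightarrow> ?parts")
proof
  assume ?walk
  hence len: "length vs = Suc (length es)" and "set (e # es) \<subseteq> E"
    and step: "\<And>i. i < Suc (length es) \<Longrightarrow> ends ((e # es) ! i) = {(v # vs) ! i, (v # vs) ! Suc i}"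
    unfolding mwalk_def by auto
  moreover have "vs \<noteq> []" using len by auto
  moreover have "ends e = {v, hd vs}" using step[of 0] \<open>vs \<noteq> []\<close> by (simp add: hd_conv_nth)
  moreover have "ends (es ! i) = {vs ! i, vs ! Suc i}" if "i < length es" for i
    using step[of "Suc i"] that by simp
  ultimately show ?parts unfolding mwalk_def by auto
next
  assume ?parts
  hence len: "length vs = Suc (length es)" and "vs \<noteq> []" "e \<in> E" "set es \<subseteq> E"
    and "ends e = {v, hd vs}" and step: "\<And>i. i < length es \<Longrightarrow> ends (es ! i) = {vs ! i, vs ! Suc i}"
    unfolding mwalk_def by auto
  moreover have "ends ((e # es) ! i) = {(v # vs) ! i, (v # vs) ! Suc i}" if "i < Suc (length es)" for i
    using that step \<open>ends e = {v, hd vs}\<close> \<open>vs \<noteq> []\<close> by (cases i) (auto simp: hd_conv_nth)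
  ultimately show ?walk unfolding mwalk_def by simp
qed

lemma mwalk_edge: "e \<in> E \<Longrightarrow> ends e = {a, b} \<Longrightarrow> mwalk E ends [a, b] [e]"
  using mwalk_Cons_iff[of E ends a "[b]" e "[]"] mwalk_singleton by simp

lemma mwalk_append:
  assumes "mwalk E ends vs1 es1" "mwalk E ends vs2 es2" "last vs1 = hd vs2"
  shows "mwalk E ends (vs1 @ tl vs2) (es1 @ es2) \<and> hd (vs1 @ tl vs2) = hd vs1 \<and> last (vs1 @ tl vs2) = last vs2"
  using assms
proof (induction es1 arbitrary: vs1)
  case Nil
  then obtain v where "vs1 = [v]" unfolding mwalk_def by (cases vs1) auto
  moreover have "vs2 \<noteq> []" using Nil mwalk_nonempty by auto
  ultimately show ?case using Nil by (cases vs2) auto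
next
  case (Cons e es1)
  obtain v vs1' where vs1: "vs1 = v # vs1'" using mwalk_nonempty[OF Cons.prems(1)] by (cases vs1) auto
  have e: "e \<in> E" "vs1' \<noteq> []" "ends e = {v, hd vs1'}" "mwalk E ends vs1' es1"
    using Cons.prems(1) unfolding vs1 mwalk_Cons_iff by auto
  have "mwalk E ends (vs1' @ tl vs2) (es1 @ es2) \<and> hd (vs1' @ tl vs2) = hd vs1' \<and> last (vs1' @ tl vs2) = last vs2"
    using Cons.IH[OF e(4) Cons.prems(2)] Cons.prems(3) vs1 e(2) by simp
  then show ?case using e(1-3) unfolding vs1 by (simp add: mwalk_Cons_iff)
qed

lemma mwalk_rev:
  assumes "mwalk E ends vs es"
  shows "mwalk E ends (rev vs) (rev es)"
proof -
  have len: "length vs = Suc (length es)" and "set es \<subseteq> E"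
    and step: "\<And>i. i < length es \<Longrightarrow> ends (es ! i) = {vs ! i, vs ! Suc i}"
    using assms unfolding mwalk_def by auto
  have "ends (rev es ! i) = {rev vs ! i, rev vs ! Suc i}" if "i < length es" for i
  proof -
    have "rev es ! i = es ! (length es - Suc i)" using that by (simp add: rev_nth)
    moreover have "rev vs ! i = vs ! Suc (length es - Suc i)" "rev vs ! Suc i = vs ! (length es - Suc i)"
      using that len by (simp_all add: rev_nth Suc_diff_Suc)
    moreover have "length es - Suc i < length es" using that by simp
    ultimately show ?thesis using step by (metis insert_commute)
  qed
  then show ?thesis using len \<open>set es \<subseteq> E\<close> unfolding mwalk_def by simp
qed

context layered_tree_graph
begin

lemma iterate_parent:
  "x \<in> U \<Longrightarrow> k \<le> \<delta> x \<Longrightarrow> (pv^^k) x \<in> U \<and> \<delta> ((pv^^k) x) = \<delta> x - k"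
proof (induction k)
  case (Suc k)
  define y where "y = (pv^^k) x"
  have y: "y \<in> U" "\<delta> y = \<delta> x - k" using Suc unfolding y_def by auto
  hence "y \<noteq> r" using Suc.prems depth_root by auto
  hence "pv y \<in> U" "\<delta> y = Suc (\<delta> (pv y))" using pv_in_U depth_pv y by auto
  moreover have "(pv^^Suc k) x = pv y" unfolding y_def by simp
  ultimately show ?case using y Suc.prems by simp
qed simp

definition common_ancestors :: "'v set \<Rightarrow> 'v set" where
  "common_ancestors P = {d. \<forall>x\<in>P. \<exists>k\<le>\<delta> x. (pv^^k) x = d}"

lemma deepest_common_ancestor_exists:
  assumes "P \<subseteq> U" "P \<noteq> {}"
  obtains c where "c \<in> common_ancestors P" "\<And>d. d \<in> common_ancestors P \<Longrightarrow> \<delta> d \<le> \<delta> c"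
proof -
  have "r \<in> common_ancestors P"
    unfolding common_ancestors_def
  proof (intro CollectI ballI)
    fix x assume "x \<in> P"
    hence "(pv^^(\<delta> x)) x = r" using iterate_parent[of x "\<delta> x"] depth_eq_0_imp_root assms(1) by auto
    then show "\<exists>k\<le>\<delta> x. (pv^^k) x = r" by blast
  qed
  moreover have "\<forall>d. d \<in> common_ancestors P \<longrightarrow> \<delta> d < Suc R"
  proof (intro allI impI)
    fix d assume "d \<in> common_ancestors P"
    moreover obtain x where "x \<in> P" using assms(2) by blast
    ultimately obtain k where "k \<le> \<delta> x" "(pv^^k) x = d" unfolding common_ancestors_def by blast
    hence "d \<in> U" using iterate_parent[of x k] \<open>x \<in> P\<close> assms(1) by auto
    then show "\<delta> d < Suc R" using depth_le by (simp add: le_imp_less_Suc)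
  qed
  ultimately obtain c where "c \<in> common_ancestors P" "\<forall>d. d \<in> common_ancestors P \<longrightarrow> \<delta> d \<le> \<delta> c"
    using Lattices_Big.ex_has_greatest_nat[of "\<lambda>d. d \<in> common_ancestors P" r \<delta> "Suc R"] by blast
  then show ?thesis using that by blast
qed

end

locale ancestor_subtree = layered_tree_graph +
  fixes P and c
  assumes P_subset: "P \<subseteq> U" and P_nonempty: "P \<noteq> {}" and finite_P: "finite P"
    and c_common: "c \<in> common_ancestors P"
    and c_deepest: "\<And>d. d \<in> common_ancestors P \<Longrightarrow> \<delta> d \<le> \<delta> c"
begin

definition height where
  "height x = \<delta> x - \<delta> c"

definition V0 where
  "V0 = {y. \<exists>x\<in>P. \<exists>k\<le>height x. y = (pv^^k) x}"

definition E0 where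
  "E0 = par ` (V0 - {c})"

lemma ancestor_height: "x \<in> P \<Longrightarrow> (pv^^height x) x = c \<and> height x \<le> \<delta> x \<and> \<delta> c = \<delta> x - height x"
proof -
  assume x: "x \<in> P"
  then obtain k where k: "k \<le> \<delta> x" "(pv^^k) x = c" using c_common unfolding common_ancestors_def by blast
  hence "\<delta> c = \<delta> x - k" using iterate_parent[of x k] x P_subset by auto
  hence "k = height x" unfolding height_def using k by simp
  thus ?thesis using k \<open>\<delta> c = \<delta> x - k\<close> by simp
qed

lemma iterate_in_V0:
  "x \<in> P \<Longrightarrow> k \<le> height x \<Longrightarrow> (pv^^k) x \<in> V0 \<and> (pv^^k) x \<in> U \<and> \<delta> ((pv^^k) x) = \<delta> x - k"
proof -
  assume x: "x \<in> P" "k \<le> height x"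
  hence "k \<le> \<delta> x" using ancestor_height by fastforce
  thus ?thesis using iterate_parent[of x k] x P_subset unfolding V0_def by auto
qed

lemma V0_subset_U: "V0 \<subseteq> U"
  unfolding V0_def using iterate_in_V0 by blast

lemma c_in_V0: "c \<in> V0"
proof -
  obtain x where "x \<in> P" using P_nonempty by blast
  then show ?thesis
    using ancestor_height[of x] unfolding V0_def by (intro CollectI bexI[of _ x] exI[of _ "height x"]) auto
qed

lemma P_subset_V0: "P \<subseteq> V0"
proof
  fix x assume "x \<in> P"
  then show "x \<in> V0" unfolding V0_def by (intro CollectI bexI[of _ x] exI[of _ 0]) auto
qed

lemma finite_V0: "finite V0"
  using V0_subset_U finite_U finite_subset by blast

lemma depth_V0: "y \<in> V0 \<Longrightarrow> \<delta> c \<le> \<delta> y \<and> (\<delta> y = \<delta> c \<longrightarrow> y = c)"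
proof -
  assume "y \<in> V0"
  then obtain x k where xk: "x \<in> P" "k \<le> height x" "y = (pv^^k) x" unfolding V0_def by auto
  have "\<delta> y = \<delta> x - k" using iterate_in_V0 xk by auto
  moreover have "(pv^^height x) x = c" "height x \<le> \<delta> x" "\<delta> c = \<delta> x - height x"
    using ancestor_height xk(1) by auto
  moreover have "\<delta> y = \<delta> c \<Longrightarrow> k = height x" using calculation xk(2) by arith
  ultimately show ?thesis using xk by auto
qed

lemma parent_in_V0: "y \<in> V0 \<Longrightarrow> y \<noteq> c \<Longrightarrow> y \<in> U \<and> y \<noteq> r \<and> pv y \<in> V0 \<and> \<delta> y = Suc (\<delta> (pv y))"
proof -
  assume y: "y \<in> V0" "y \<noteq> c"
  then obtain x k where xk: "x \<in> P" "k \<le> height x" "y = (pv^^k) x" unfolding V0_def by auto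
  have "k \<noteq> height x" using xk ancestor_height y(2) by auto
  hence "Suc k \<le> height x" using xk(2) by simp
  hence "(pv^^Suc k) x \<in> V0" using iterate_in_V0[OF xk(1)] by blast
  hence "pv y \<in> V0" using xk(3) by simp
  moreover have "y \<in> U" using y V0_subset_U by auto
  moreover have "y \<noteq> r" using depth_V0[OF y(1)] y(2) depth_root by auto
  ultimately show ?thesis using depth_pv by auto
qed

lemma E0_subset: "E0 \<subseteq> E"
  unfolding E0_def using parent_in_V0 par_in_E by auto

lemma E0_subset_tree_edges: "E0 \<subseteq> par ` (U - {r})"
  unfolding E0_def using parent_in_V0 by blast

lemma ends_par_V0: "y \<in> V0 \<Longrightarrow> y \<noteq> c \<Longrightarrow> ends (par y) = {y, pv y}"
  using parent_in_V0 ends_par by auto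

lemma ends_E0_subset: "e \<in> E0 \<Longrightarrow> ends e \<subseteq> V0"
proof -
  assume "e \<in> E0"
  then obtain y where "y \<in> V0" "y \<noteq> c" "e = par y" unfolding E0_def by blast
  then show ?thesis using ends_par_V0 parent_in_V0 by simp
qed

lemma finite_E0: "finite E0"
  unfolding E0_def using finite_V0 by simp

lemma walk_from_c:
  "y \<in> V0 \<Longrightarrow> \<exists>vs es. mwalk E0 ends vs es \<and> hd vs = c \<and> last vs = y \<and> length es = \<delta> y - \<delta> c"
proof (induction "\<delta> y - \<delta> c" arbitrary: y)
  case 0
  hence "y = c" using depth_V0[OF 0(2)] by simp
  thus ?case using mwalk_singleton[of E0 ends c] 0 by force
next
  case (Suc n)
  have "y \<noteq> c" using Suc by auto
  hence y: "pv y \<in> V0" "\<delta> y = Suc (\<delta> (pv y))" using parent_in_V0[OF Suc.prems] by auto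
  hence "n = \<delta> (pv y) - \<delta> c" using Suc(2) depth_V0[OF y(1)] by simp
  then obtain vs es where walk: "mwalk E0 ends vs es" "hd vs = c" "last vs = pv y" "length es = n"
    using Suc.hyps(1) y(1) by blast
  have "par y \<in> E0" unfolding E0_def using Suc.prems \<open>y \<noteq> c\<close> by auto
  moreover have "ends (par y) = {pv y, y}" using ends_par_V0[OF Suc.prems \<open>y \<noteq> c\<close>] by auto
  ultimately have "mwalk E0 ends [pv y, y] [par y]" by (rule mwalk_edge)
  from mwalk_append[OF walk(1) this] walk(2,3)
  have "mwalk E0 ends (vs @ [y]) (es @ [par y])" "hd (vs @ [y]) = c" "last (vs @ [y]) = y" by simp_all
  then show ?case using walk(4) Suc(2) by (intro exI[of _ "vs @ [y]"] exI[of _ "es @ [par y]"]) simp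
qed

lemma E0_depths: "e \<in> E0 \<Longrightarrow> ends e = {a, b} \<Longrightarrow> \<delta> a = Suc (\<delta> b) \<or> \<delta> b = Suc (\<delta> a)"
proof -
  assume e: "e \<in> E0" "ends e = {a, b}"
  then obtain y where y: "y \<in> V0" "y \<noteq> c" "e = par y" unfolding E0_def by blast
  have "{y, pv y} = {a, b}" using ends_par_V0[OF y(1,2)] y(3) e(2) by simp
  moreover have "\<delta> y = Suc (\<delta> (pv y))" using parent_in_V0[OF y(1,2)] by simp
  ultimately show ?thesis by (auto simp: doubleton_eq_iff)
qed

lemma depth_last_le: "mwalk E0 ends vs es \<Longrightarrow> \<delta> (last vs) \<le> \<delta> (hd vs) + length es"
proof (induction es arbitrary: vs)
  case Nil
  then obtain v where "vs = [v]" unfolding mwalk_def by (cases vs) auto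
  thus ?case by simp
next
  case (Cons e es)
  obtain v vs' where vs: "vs = v # vs'" using mwalk_nonempty[OF Cons.prems] by (cases vs) auto
  have e: "e \<in> E0" "vs' \<noteq> []" "ends e = {v, hd vs'}" "mwalk E0 ends vs' es"
    using Cons.prems unfolding vs mwalk_Cons_iff by auto
  have "\<delta> (hd vs') \<le> Suc (\<delta> v)" using E0_depths[OF e(1,3)] by auto
  thus ?case using Cons.IH[OF e(4)] vs e(2) by simp
qed

lemma mdist_c: "y \<in> V0 \<Longrightarrow> mdist E0 ends c y = \<delta> y - \<delta> c"
  unfolding mdist_def
proof (rule Least_equality)
  assume "y \<in> V0"
  then show "\<exists>vs es. mwalk E0 ends vs es \<and> hd vs = c \<and> last vs = y \<and> length es = \<delta> y - \<delta> c"
    by (rule walk_from_c)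
next
  fix k assume "\<exists>vs es. mwalk E0 ends vs es \<and> hd vs = c \<and> last vs = y \<and> length es = k"
  then show "\<delta> y - \<delta> c \<le> k" using depth_last_le by fastforce
qed

lemma mdist_edge_par: "y \<in> V0 \<Longrightarrow> y \<noteq> c \<Longrightarrow> mdist_edge E0 ends c (par y) = \<delta> (pv y) - \<delta> c"
proof -
  assume y: "y \<in> V0" "y \<noteq> c"
  have pv: "pv y \<in> V0" "\<delta> y = Suc (\<delta> (pv y))" using parent_in_V0[OF y] by auto
  have "(\<lambda>x. mdist E0 ends c x) ` ends (par y) = {\<delta> y - \<delta> c, \<delta> (pv y) - \<delta> c}"
    using ends_par_V0[OF y] mdist_c[OF y(1)] mdist_c[OF pv(1)] by simp
  moreover have "\<delta> c \<le> \<delta> (pv y)" using depth_V0[OF pv(1)] by simp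
  ultimately show ?thesis unfolding mdist_edge_def using pv(2) by (simp add: min_def)
qed

lemma mconnected_V0: "mconnected V0 E0 ends"
  unfolding mconnected_def
proof (intro ballI)
  fix u v assume "u \<in> V0" "v \<in> V0"
  obtain vs1 es1 where "mwalk E0 ends vs1 es1" "hd vs1 = c" "last vs1 = u"
    using walk_from_c[OF \<open>u \<in> V0\<close>] by blast
  hence walk1: "mwalk E0 ends (rev vs1) (rev es1)" "hd (rev vs1) = u" "last (rev vs1) = c"
    using mwalk_rev mwalk_nonempty by (auto simp: hd_rev last_rev)
  obtain vs2 es2 where "mwalk E0 ends vs2 es2" "hd vs2 = c" "last vs2 = v"
    using walk_from_c[OF \<open>v \<in> V0\<close>] by blast
  then show "\<exists>vs es. mwalk E0 ends vs es \<and> hd vs = u \<and> last vs = v"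
    using mwalk_append[OF walk1(1)] walk1(2,3) by metis
qed

text \<open>An edge of \<open>E0\<close> is the parent edge of its deeper endpoint; hence a vertex of maximal
  depth on a cycle would have its two cycle edges equal.\<close>
lemma E0_edge_at_deeper_end: "e \<in> E0 \<Longrightarrow> v \<in> ends e \<Longrightarrow> \<forall>u\<in>ends e. \<delta> u \<le> \<delta> v \<Longrightarrow> e = par v"
proof -
  assume e: "e \<in> E0" "v \<in> ends e" "\<forall>u\<in>ends e. \<delta> u \<le> \<delta> v"
  then obtain y where y: "y \<in> V0" "y \<noteq> c" "e = par y" unfolding E0_def by blast
  have ends_e: "ends e = {y, pv y}" and "\<delta> y = Suc (\<delta> (pv y))"
    using ends_par_V0[OF y(1,2)] parent_in_V0[OF y(1,2)] y(3) by auto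
  have "v = y"
  proof (rule ccontr)
    assume "v \<noteq> y"
    hence "v = pv y" using e(2) ends_e by simp
    moreover have "\<delta> y \<le> \<delta> v" using e(3) ends_e by simp
    ultimately show False using \<open>\<delta> y = Suc (\<delta> (pv y))\<close> by simp
  qed
  then show ?thesis using y(3) by simp
qed

lemma no_mcycle_E0: "\<not> has_mcycle E0 ends"
proof
  assume "has_mcycle E0 ends"
  then obtain vs es where cyc: "length es \<ge> 1" "length vs = length es" "distinct es" "set es \<subseteq> E0"
    and ends_i: "\<And>i. i < length es \<Longrightarrow> ends (es!i) = {vs!i, vs!(Suc i mod length es)}"
    unfolding has_mcycle_def by blast
  define n where "n = length es"
  have "0 < n" using cyc(1) unfolding n_def by linarith
  have es_E0: "es!i \<in> E0" if "i < n" for i using that cyc(4) unfolding n_def by (meson nth_mem subsetD)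
  have "\<forall>i. i < n \<longrightarrow> \<delta> (vs!i) < Suc R"
  proof (intro allI impI)
    fix i assume "i < n"
    hence "vs!i \<in> V0" using ends_i[of i] ends_E0_subset[OF es_E0] unfolding n_def by blast
    then show "\<delta> (vs!i) < Suc R" using V0_subset_U depth_le by (simp add: le_imp_less_Suc subset_iff)
  qed
  then obtain m where m: "m < n" "\<forall>i. i < n \<longrightarrow> \<delta> (vs!i) \<le> \<delta> (vs!m)"
    using Lattices_Big.ex_has_greatest_nat[of "\<lambda>i. i < n" 0 "\<lambda>i. \<delta> (vs!i)" "Suc R"] \<open>0 < n\<close> by blast
  have par_m: "es!i = par (vs!m)" if "i < n" "vs!m \<in> ends (es!i)" for i
  proof (rule E0_edge_at_deeper_end)
    show "es!i \<in> E0" using es_E0 that(1) .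
    show "\<forall>u\<in>ends (es!i). \<delta> u \<le> \<delta> (vs!m)" using ends_i[of i] m(2) that \<open>0 < n\<close> unfolding n_def by auto
  qed (use that in simp)
  define j where "j = (if m = 0 then n - 1 else m - 1)"
  have j: "j < n" "Suc j mod n = m" unfolding j_def using m(1) \<open>0 < n\<close> by auto
  have "es!j = es!m" using par_m[of j] par_m[of m] ends_i j m(1) unfolding n_def by simp
  hence "n = 1" using nth_eq_iff_index_eq[OF cyc(3)] j m(1) unfolding j_def n_def by (auto split: if_splits)
  hence "ends (es!0) = {vs!0}" using ends_i[of 0] unfolding n_def by simp
  moreover have "es!0 \<in> E" using es_E0 E0_subset \<open>0 < n\<close> by blast
  ultimately show False using card_ends by fastforce
qed

lemma child_on_path:
  assumes "x \<in> P" "1 \<le> k" "k \<le> height x"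
  shows "(pv^^(k-1)) x \<in> V0 - {c} \<and> pv ((pv^^(k-1)) x) = (pv^^k) x"
proof -
  have "(pv^^(k-1)) x \<in> V0" "\<delta> ((pv^^(k-1)) x) = \<delta> x - (k-1)" using iterate_in_V0[OF assms(1)] assms by auto
  moreover have "\<delta> c < \<delta> x - (k-1)" using ancestor_height[OF assms(1)] assms(2,3) by linarith
  moreover have "pv ((pv^^(k-1)) x) = (pv^^Suc (k-1)) x" by simp
  ultimately show ?thesis using assms(2) by auto
qed

lemma two_le_mdegree_E0_if_two_children:
  assumes "z1 \<in> V0 - {c}" "z2 \<in> V0 - {c}" "z1 \<noteq> z2" "v \<in> ends (par z1)" "v \<in> ends (par z2)"
  shows "2 \<le> mdegree E0 ends v"
proof -
  have "z1 \<in> U - {r}" "z2 \<in> U - {r}" using parent_in_V0 assms(1,2) by auto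
  hence "par z1 \<noteq> par z2" using inj_onD[OF par_inj_on] assms(3) by blast
  hence "card {par z1, par z2} = 2" by simp
  moreover have "{par z1, par z2} \<subseteq> {e\<in>E0. v \<in> ends e}" using assms unfolding E0_def by auto
  ultimately show ?thesis
    unfolding mdegree_def using card_mono[OF _ \<open>{par z1, par z2} \<subseteq> _\<close>] finite_E0 by simp
qed

lemma two_le_mdegree_E0: "v \<in> V0 \<Longrightarrow> v \<notin> P \<Longrightarrow> 2 \<le> mdegree E0 ends v"
proof (cases "v = c")
  assume v: "v \<in> V0" "v \<notin> P" "v \<noteq> c"
  then obtain x k where xk: "x \<in> P" "k \<le> height x" "v = (pv^^k) x" unfolding V0_def by auto
  have "k \<noteq> 0" using xk v(2) by (cases k) auto
  hence "(pv^^(k-1)) x \<in> V0 - {c}" "pv ((pv^^(k-1)) x) = v"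
    using child_on_path[OF xk(1) _ xk(2)] xk(3) by auto
  moreover have "(pv^^(k-1)) x \<noteq> v"
  proof
    assume "(pv^^(k-1)) x = v"
    hence "\<delta> v = Suc (\<delta> v)" using parent_in_V0[of "(pv^^(k-1)) x"] calculation by auto
    thus False by simp
  qed
  ultimately show ?thesis
    using two_le_mdegree_E0_if_two_children[of v "(pv^^(k-1)) x" v] v ends_par_V0 by auto
next
  assume v: "v \<in> V0" "v \<notin> P" "v = c"
  define child where "child x = (pv^^(height x - 1)) x" for x
  have height: "1 \<le> height x" if "x \<in> P" for x
  proof (rule ccontr)
    assume "\<not> 1 \<le> height x"
    hence "height x = 0" by simp
    hence "x = c" using ancestor_height[OF that] by simp
    thus False using that v by simp
  qed
  have child: "child x \<in> V0 - {c}" "pv (child x) = c" if "x \<in> P" for x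
    using child_on_path[OF that height[OF that] order_refl] ancestor_height[OF that]
    unfolding child_def by simp_all
  have "\<exists>x1\<in>P. \<exists>x2\<in>P. child x1 \<noteq> child x2"
  proof (rule ccontr)
    assume "\<not> ?thesis"
    hence same: "\<And>x1 x2. x1 \<in> P \<Longrightarrow> x2 \<in> P \<Longrightarrow> child x1 = child x2" by blast
    obtain x0 where "x0 \<in> P" using P_nonempty by blast
    have "child x0 \<in> common_ancestors P"
      unfolding common_ancestors_def
    proof (intro CollectI ballI)
      fix y assume "y \<in> P"
      have "height y - 1 \<le> \<delta> y" using ancestor_height[OF \<open>y \<in> P\<close>] by linarith
      moreover have "(pv^^(height y - 1)) y = child x0"
        using same[OF \<open>y \<in> P\<close> \<open>x0 \<in> P\<close>] unfolding child_def .
      ultimately show "\<exists>k\<le>\<delta> y. (pv^^k) y = child x0" by blast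
    qed
    then have "\<delta> (child x0) \<le> \<delta> c" by (rule c_deepest)
    moreover have "\<delta> (child x0) = Suc (\<delta> c)"
      using child[OF \<open>x0 \<in> P\<close>] parent_in_V0[of "child x0"] by auto
    ultimately show False by simp
  qed
  then obtain x1 x2 where "x1 \<in> P" "x2 \<in> P" "child x1 \<noteq> child x2" by blast
  then show ?thesis
    using two_le_mdegree_E0_if_two_children[of "child x1" "child x2" c] child ends_par_V0 v by auto
qed

lemma mleaves_subset_P: "mleaves V0 E0 ends \<subseteq> P"
  unfolding mleaves_def using two_le_mdegree_E0 by fastforce

lemma card_V0_le: "card V0 \<le> card P * Suc R"
proof -
  have "V0 = (\<Union>x\<in>P. (\<lambda>k. (pv^^k) x) ` {..height x})" unfolding V0_def by auto
  hence "card V0 \<le> (\<Sum>x\<in>P. card ((\<lambda>k. (pv^^k) x) ` {..height x}))"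
    using card_UN_le[OF finite_P] by simp
  also have "\<dots> \<le> (\<Sum>x\<in>P. Suc R)"
  proof (rule sum_mono)
    fix x assume x: "x \<in> P"
    have "card ((\<lambda>k. (pv^^k) x) ` {..height x}) \<le> Suc (height x)"
      using card_image_le[of "{..height x}"] by simp
    moreover have "height x \<le> R" using ancestor_height[OF x] depth_le[of x] x P_subset by auto
    ultimately show "card ((\<lambda>k. (pv^^k) x) ` {..height x}) \<le> Suc R" by simp
  qed
  finally show ?thesis by simp
qed

lemma mdist_edge_conflict:
  assumes "e1 \<in> E0" "e2 \<in> E0" "w e1 \<inter> w e2 \<noteq> {}"
  shows "\<bar>int (mdist_edge E0 ends c e1) - int (mdist_edge E0 ends c e2)\<bar> \<le> int \<beta>"
proof -
  obtain y1 y2 where y: "y1 \<in> V0 - {c}" "e1 = par y1" "y2 \<in> V0 - {c}" "e2 = par y2"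
    using assms(1,2) unfolding E0_def by blast
  have p1: "y1 \<in> U" "y1 \<noteq> r" "\<delta> y1 = Suc (\<delta> (pv y1))" "\<delta> c \<le> \<delta> (pv y1)"
    using parent_in_V0[of y1] depth_V0[of "pv y1"] y(1) by auto
  have p2: "y2 \<in> U" "y2 \<noteq> r" "\<delta> y2 = Suc (\<delta> (pv y2))" "\<delta> c \<le> \<delta> (pv y2)"
    using parent_in_V0[of y2] depth_V0[of "pv y2"] y(3) by auto
  have "\<delta> y1 \<le> \<delta> y2 + \<beta>" "\<delta> y2 \<le> \<delta> y1 + \<beta>"
    using depth_conflict[OF p1(1,2) p2(1,2)] depth_conflict[OF p2(1,2) p1(1,2)] assms(3) y
    by (auto simp: Int_commute)
  then show ?thesis using mdist_edge_par y p1 p2 by auto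
qed

lemma is_mtree_V0: "is_mtree V0 E0 ends"
  unfolding is_mtree_def using finite_V0 c_in_V0 finite_E0 ends_E0_subset mconnected_V0 no_mcycle_E0 by blast

end

section \<open>The tree \<open>T\<^sub>0\<close>\<close>

context layered_tree_graph
begin

lemma tree_through_two_chords:
  assumes chords: "e1 \<in> chords" "e2 \<in> chords" "e1 \<noteq> e2" and bound: "4 * real (Suc R) \<le> B"
  shows "\<exists>V0 E0 r0. V0 \<subseteq> V \<and> E0 \<subseteq> E \<and> is_mtree V0 E0 ends \<and> r0 \<in> V0 \<and> real (card V0) \<le> B \<and>
     (\<exists>e1 e2. e1 \<in> E - E0 \<and> e2 \<in> E - E0 \<and> e1 \<noteq> e2 \<and> ends e1 \<subseteq> V0 \<and> ends e2 \<subseteq> V0) \<and>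
     card (mleaves V0 E0 ends) \<le> 4 \<and>
     (\<forall>f1\<in>E0. \<forall>f2\<in>E0. w f1 \<inter> w f2 \<noteq> {} \<longrightarrow>
        \<bar>int (mdist_edge E0 ends r0 f1) - int (mdist_edge E0 ends r0 f2)\<bar> \<le> int \<beta>)"
proof -
  define P where "P = ends e1 \<union> ends e2"
  have "e1 \<in> E" "e2 \<in> E" "P \<subseteq> U" using chords unfolding chords_def P_def by auto
  hence "finite P" "P \<noteq> {}" "card P \<le> 4"
    using finite_ends card_ends card_Un_le[of "ends e1" "ends e2"] unfolding P_def by fastforce+
  obtain c where "c \<in> common_ancestors P" "\<And>d. d \<in> common_ancestors P \<Longrightarrow> \<delta> d \<le> \<delta> c"
    using deepest_common_ancestor_exists[OF \<open>P \<subseteq> U\<close> \<open>P \<noteq> {}\<close>] by blast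
  then interpret ancestor_subtree V E ends w \<beta> R r U par pv \<delta> P c
    using \<open>P \<subseteq> U\<close> \<open>P \<noteq> {}\<close> \<open>finite P\<close> by unfold_locales
  have "card V0 \<le> 4 * Suc R" using card_V0_le \<open>card P \<le> 4\<close> by (meson le_trans mult_le_mono1)
  hence "real (card V0) \<le> B" using bound by (simp add: of_nat_mono order_trans)
  moreover have "card (mleaves V0 E0 ends) \<le> 4"
    using card_mono[OF finite_P mleaves_subset_P] \<open>card P \<le> 4\<close> by simp
  moreover have "e1 \<in> E - E0" "e2 \<in> E - E0"
    using chords E0_subset_tree_edges \<open>e1 \<in> E\<close> \<open>e2 \<in> E\<close> unfolding chords_def by auto
  moreover have "ends e1 \<subseteq> V0" "ends e2 \<subseteq> V0" using P_subset_V0 unfolding P_def by auto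
  ultimately show ?thesis
    using V0_subset_U U_subset E0_subset is_mtree_V0 c_in_V0 mdist_edge_conflict \<open>e1 \<noteq> e2\<close>
    by (intro exI[of _ V0] exI[of _ E0] exI[of _ c]) blast
qed

lemma power_le_card_if_one_chord:
  fixes \<gamma> :: real and \<Sigma> :: "'c set"
  assumes mindeg: "\<forall>v\<in>V. 3 \<le> mdegree E ends v"
    and blocked: "blocked_below E ends w \<beta> r U par \<delta> R"
    and w_sub: "\<forall>e\<in>E. w e \<subseteq> \<Sigma>"
    and w_card: "\<forall>e\<in>E. finite (w e) \<and> real (card (w e)) \<le> \<gamma>"
    and c_card: "\<forall>c\<in>\<Sigma>. finite {e\<in>E. c \<in> w e} \<and> real (card {e\<in>E. c \<in> w e}) \<le> \<gamma>"
    and beta: "12 * \<gamma>^2 \<le> (3/2)^\<beta>" and gamma: "1 \<le> \<gamma>"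
    and one_chord: "card chords \<le> 1"
  shows "(3/2)^R \<le> real (card V)"
proof -
  interpret level_recurrence "\<lambda>k. card (level k)" "\<lambda>k. \<Sum>v\<in>level k. card {e\<in>chords. v \<in> ends e}" \<gamma> \<beta> R
  proof
    have "card {e\<in>chords. r \<in> ends e} \<le> card chords"
      using finite_E by (intro card_mono) (auto simp: chords_def)
    then show "(\<Sum>v\<in>level 0. card {e\<in>chords. v \<in> ends e}) \<le> 1" using one_chord level_0 by simp
    show "(\<Sum>k<R. \<Sum>v\<in>level k. card {e\<in>chords. v \<in> ends e}) \<le> 2"
      using sum_levels_incident_chords_le one_chord by linarith
  qed (use level_0 level_recurrence_step[OF mindeg blocked _ w_sub w_card c_card] beta gamma in auto)
  have "card (level R) \<le> card V"
    using finite_V U_subset by (intro card_mono) (auto simp: level_def)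
  then show ?thesis using power_le_last_level by linarith
qed

end

theorem lemma5:
  fixes V :: "'v set" and E :: "'e set" and ends :: "'e \<Rightarrow> 'v set"
    and \<gamma> :: real and \<Sigma> :: "'c set" and w :: "'e \<Rightarrow> 'c set"
  assumes H: "loopless_multigraph V E ends"
    and nonempty: "V \<noteq> {}"
    and mindeg: "\<forall>v\<in>V. mdegree E ends v \<ge> 3"
    and gamma: "\<gamma> \<ge> 1"
    and w_sub: "\<forall>e\<in>E. w e \<subseteq> \<Sigma>"
    and w_card: "\<forall>e\<in>E. finite (w e) \<and> real (card (w e)) \<le> \<gamma>"
    and c_card: "\<forall>c\<in>\<Sigma>. finite {e\<in>E. c \<in> w e} \<and> real (card {e\<in>E. c \<in> w e}) \<le> \<gamma>"
  shows "\<exists>V0 E0 r0. V0 \<subseteq> V \<and> E0 \<subseteq> E \<and> is_mtree V0 E0 ends \<and> r0 \<in> V0 \<and>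
     real (card V0) \<le> 4 * (log (3/2) (real (card V)) + 2) \<and>
     (\<exists>e1 e2. e1 \<in> E - E0 \<and> e2 \<in> E - E0 \<and> e1 \<noteq> e2 \<and> ends e1 \<subseteq> V0 \<and> ends e2 \<subseteq> V0) \<and>
     card (mleaves V0 E0 ends) \<le> 4 \<and>
     (\<forall>e1\<in>E0. \<forall>e2\<in>E0. w e1 \<inter> w e2 \<noteq> {} \<longrightarrow>
        \<bar>int (mdist_edge E0 ends r0 e1) - int (mdist_edge E0 ends r0 e2)\<bar>
          \<le> \<lceil>log (3/2) (12 * \<gamma>^2)\<rceil>)"
proof -
  define \<beta> where "\<beta> = nat \<lceil>log (3/2) (12 * \<gamma>^2)\<rceil>"
  define R where "R = Suc (nat \<lfloor>log (3/2) (real (card V))\<rfloor>)"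
  have "1 \<le> \<gamma>^2" using gamma by (simp add: one_le_power)
  then have beta: "12 * \<gamma>^2 \<le> (3/2)^\<beta>" and int_beta: "int \<beta> = \<lceil>log (3/2) (12 * \<gamma>^2)\<rceil>"
    unfolding \<beta>_def using nat_ceiling_log[of "3/2" "12 * \<gamma>^2"] by auto
  have "1 \<le> real (card V)" using H nonempty unfolding loopless_multigraph_def by (simp add: Suc_leI card_gt_0_iff)
  then have small: "real (card V) < (3/2)^R" and "4 * real (Suc R) \<le> 4 * (log (3/2) (real (card V)) + 2)"
    unfolding R_def using nat_floor_log[of "3/2" "real (card V)"] by auto
  obtain r where "r \<in> V" using nonempty by blast
  then obtain U par pv \<delta> where tree: "layered_tree V E ends w \<beta> R r U par pv \<delta>"
    and blocked: "blocked_below E ends w \<beta> r U par \<delta> R" using blocked_layered_tree_exists[OF H] by blast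
  interpret layered_tree_graph V E ends w \<beta> R r U par pv \<delta> using H tree by unfold_locales
  show ?thesis
  proof (cases "\<exists>e1\<in>chords. \<exists>e2\<in>chords. e1 \<noteq> e2")
    case True
    then obtain e1 e2 where "e1 \<in> chords" "e2 \<in> chords" "e1 \<noteq> e2" by blast
    from tree_through_two_chords[OF this \<open>4 * real (Suc R) \<le> _\<close>] show ?thesis unfolding int_beta .
  next
    case False
    hence "card chords \<le> 1" using card_le_Suc0_iff_eq[OF finite_chords] by auto
    then show ?thesis
      using power_le_card_if_one_chord[OF mindeg blocked w_sub w_card c_card beta gamma] small by simp
  qed
qed

end
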